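(* Let $p=p(n)$ with $p/n\to y\in(0,\infty)$. For each $n$ let $\{x_{i,n}\}_i$ be i.i.d. with all moments finite, and suppose that for every $k\ge1$, $n\,\mathbb E[x_{0,n}^k]\to C_k$ as $n\to\infty$, where, with $C'_{2k}=|C_{2k}|$ and $C'_{2k-1}=0$, the numbers $\alpha_k=\sum_{\sigma\in\mathcal P(2k)}\prod_{V\in\sigma}C'_{|V|}$ satisfy $\sum_k\alpha_{2k}^{-1/(2k)}=\infty$. For each of the link functions $L\in\{L_T,L_{H^{(s)}},L_{R^{(s)}},L_C\}$ let $\mu_L$ denote the weak limit of the EESD of $A_LA_L^T$, where $A_L$ is the $p\times n$ matrix with entries $x_{L(i,j),n}$ (these limits exist by Theorem 2.2). Then $\mu_{L_T}=\mu_{L_{H^{(s)}}}$ and $\mu_{L_{R^{(s)}}}=\mu_{L_C}$.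
   Context: Link functions ($1\le i\le p$, $1\le j\le n$): $L_T(i,j)=i-j$; $L_{H^{(s)}}(i,j)=i+j$; $L_{R^{(s)}}(i,j)=(i+j-2)\bmod n$; $L_C(i,j)=(j-i)\bmod n$. $\mathcal P(2k)$ is the set of partitions of $\{1,\dots,2k\}$. EESD of a $p\times p$ symmetric random matrix: $B\mapsto\mathbb E[\frac1p\#\{\text{eigenvalues in }B\}]$. *)

theory Defs
  imports "HOL-Probability.Probability" "Jordan_Normal_Form.Char_Poly"
begin

text \<open>Link functions (1-based indices i in 1..p, j in 1..n); the parameter n is the
  number of columns, needed for the circulant-type links.\<close>

definition link_T :: "nat \<Rightarrow> nat \<Rightarrow> nat \<Rightarrow> int" where
  "link_T n i j = int i - int j"

definition link_H :: "nat \<Rightarrow> nat \<Rightarrow> nat \<Rightarrow> int" where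
  "link_H n i j = int i + int j"

definition link_R :: "nat \<Rightarrow> nat \<Rightarrow> nat \<Rightarrow> int" where
  "link_R n i j = (int i + int j - 2) mod int n"

definition link_C :: "nat \<Rightarrow> nat \<Rightarrow> nat \<Rightarrow> int" where
  "link_C n i j = (int j - int i) mod int n"

text \<open>The p x n matrix with (i,j) entry x (L(i,j)); Jordan_Normal_Form matrices are
  0-based, so entry (i,j) corresponds to the paper's (i+1,j+1).\<close>

definition link_matrix :: "nat \<Rightarrow> nat \<Rightarrow> (nat \<Rightarrow> nat \<Rightarrow> nat \<Rightarrow> int) \<Rightarrow> (int \<Rightarrow> real) \<Rightarrow> real mat" where
  "link_matrix p n L x = mat p n (\<lambda>(i, j). x (L n (i + 1) (j + 1)))"

definition eig_count :: "real mat \<Rightarrow> real set \<Rightarrow> nat" where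
  "eig_count A B = (\<Sum>t\<in>{t. poly (char_poly A) t = 0} \<inter> B. order t (char_poly A))"

definition EESD :: "'a measure \<Rightarrow> ('a \<Rightarrow> real mat) \<Rightarrow> nat \<Rightarrow> real measure" where
  "EESD M Y p = measure_of UNIV (sets borel)
      (\<lambda>B. \<integral>\<^sup>+ \<omega>. ennreal (real (eig_count (Y \<omega>) B) / real p) \<partial>M)"

definition link_EESD :: "(nat \<Rightarrow> 'a measure) \<Rightarrow> (nat \<Rightarrow> int \<Rightarrow> 'a \<Rightarrow> real) \<Rightarrow> (nat \<Rightarrow> nat)
    \<Rightarrow> (nat \<Rightarrow> nat \<Rightarrow> nat \<Rightarrow> int) \<Rightarrow> nat \<Rightarrow> real measure" where
  "link_EESD M X p L n =
     EESD (M n) (\<lambda>\<omega>. let A = link_matrix (p n) n L (\<lambda>i. X n i \<omega>) in A * transpose_mat A) (p n)"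

definition Cprime :: "(nat \<Rightarrow> real) \<Rightarrow> nat \<Rightarrow> real" where
  "Cprime C m = (if even m then \<bar>C m\<bar> else 0)"

definition alpha :: "(nat \<Rightarrow> real) \<Rightarrow> nat \<Rightarrow> real" where
  "alpha C k = (\<Sum>P\<in>{P. partition_on {1..2*k} P}. \<Prod>V\<in>P. Cprime C (card V))"

text \<open>Carleman-type condition sum_{k>=1} alpha_{2k}^{-1/(2k)} = infinity
  (with the convention 0^{-a} = infinity).\<close>

definition carleman_diverges :: "(nat \<Rightarrow> real) \<Rightarrow> bool" where
  "carleman_diverges a \<longleftrightarrow>
     (\<exists>k\<ge>1. a (2*k) = 0) \<or>
     \<not> summable (\<lambda>k. a (2 * Suc k) powr (- 1 / real (2 * Suc k)))"

end

theory Submission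
  imports Defs
begin

text \<open>For every n the two EESDs in each pair already coincide, so the weak limits agree because
  weak limits are unique. For the circulant-type links this is deterministic: the Gram entries of
  both matrices are sums over a full period of an n-periodic sequence, and A_R A_R^T is conjugate
  to A_C A_C^T by the reversal permutation. For the Toeplitz and Hankel links, reversing the
  columns of A_T gives the Hankel matrix of the shifted sequence k \<mapsto> x (k - n - 1), which has
  the same law because the entries are i.i.d.; this suffices because eigenvalue counts are Borel
  functions of the sequence, the number of roots in (-\<infinity>, x] of a monic polynomial being upper
  semicontinuous in its coefficients. The moment and Carleman hypotheses only ensure that the
  limits exist, which is assumed.\<close>

definition root_count :: "real poly \<Rightarrow> real set \<Rightarrow> nat" where
  "root_count q B = (\<Sum>t\<in>{t. poly q t = 0} \<inter> B. order t q)"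

lemma eig_count_eq_root_count: "eig_count A B = root_count (char_poly A) B"
  by (simp add: eig_count_def root_count_def)

lemma root_count_eq_sum_indicator:
  assumes "q \<noteq> 0"
  shows "real (root_count q B) = (\<Sum>t\<in>{t. poly q t = 0}. real (order t q) * indicator B t)"
  using poly_roots_finite[OF assms]
  by (simp add: root_count_def sum.inter_restrict indicator_def if_distrib cong: if_cong)

lemma root_count_linear_factor:
  assumes "q \<noteq> 0"
  shows "root_count ([:-r, 1:] * q) B = root_count q B + (if r \<in> B then 1 else 0)"
proof -
  have nz: "[:-r, 1:] * q \<noteq> 0" using assms by (simp only: mult_eq_0_iff) simp
  have roots: "{t. poly ([:-r, 1:] * q) t = 0} = insert r {t. poly q t = 0}" by auto
  have "real (root_count ([:-r, 1:] * q) B)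
      = (\<Sum>t\<in>insert r {t. poly q t = 0}. real (order t [:-r, 1:] + order t q) * indicator B t)"
    unfolding root_count_eq_sum_indicator[OF nz] roots order_mult[OF nz] ..
  also have "\<dots> = (\<Sum>t\<in>insert r {t. poly q t = 0}. (if t = r then indicator B t else 0)
                  + real (order t q) * indicator B t)"
    by (intro sum.cong) (auto simp: order_linear' algebra_simps)
  also have "\<dots> = (\<Sum>t\<in>insert r {t. poly q t = 0}. if t = r then indicator B t else 0)
                  + (\<Sum>t\<in>insert r {t. poly q t = 0}. real (order t q) * indicator B t)"
    by (rule sum.distrib)
  also have "(\<Sum>t\<in>insert r {t. poly q t = 0}. if t = r then indicator B t else 0) = indicator B r"
    using poly_roots_finite[OF assms] by simp
  also have "(\<Sum>t\<in>insert r {t. poly q t = 0}. real (order t q) * indicator B t) = real (root_count q B)"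
    unfolding root_count_eq_sum_indicator[OF assms]
    by (rule sum.mono_neutral_right) (use poly_roots_finite[OF assms] in \<open>auto simp: order_root\<close>)
  finally have "real (root_count ([:-r, 1:] * q) B) = real (root_count q B + (if r \<in> B then 1 else 0))"
    by (simp add: indicator_def)
  then show ?thesis by (simp only: of_nat_eq_iff)
qed

lemma root_count_pos_imp_root:
  assumes "0 < root_count q B"
  shows "\<exists>t\<in>B. poly q t = 0"
proof (rule ccontr)
  assume "\<not> ?thesis"
  then have "{t. poly q t = 0} \<inter> B = {}" by auto
  with assms show False by (simp add: root_count_def)
qed

lemma root_count_Diff_UNIV:
  assumes "q \<noteq> 0"
  shows "real (root_count q (UNIV - A)) = real (root_count q UNIV) - real (root_count q A)"
  unfolding root_count_eq_sum_indicator[OF assms]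
  by (auto simp: sum_subtractf[symmetric] indicator_def intro!: sum.cong)

lemma root_count_sums:
  assumes "q \<noteq> 0" "disjoint_family A"
  shows "(\<lambda>i. real (root_count q (A i))) sums real (root_count q (\<Union>i. A i))"
  unfolding root_count_eq_sum_indicator[OF assms(1)]
  using assms(2) by (intro sums_sum sums_mult indicator_sums) (auto simp: disjoint_family_on_def)

lemma root_count_atMost_tendsto_UNIV:
  assumes "q \<noteq> 0"
  shows "(\<lambda>k. real (root_count q {..real k})) \<longlonglongrightarrow> real (root_count q UNIV)"
  unfolding root_count_eq_sum_indicator[OF assms]
proof (intro tendsto_sum tendsto_mult tendsto_const)
  fix t :: real
  have "eventually (\<lambda>k. t \<le> real k) sequentially"
    using real_arch_simple[of t] by (metis eventually_sequentiallyI of_nat_mono order_trans)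
  then have "eventually (\<lambda>k. indicator {..real k} t = (indicator UNIV t :: real)) sequentially"
    by eventually_elim simp
  then show "(\<lambda>k. indicator {..real k} t) \<longlonglongrightarrow> (indicator UNIV t :: real)"
    by (rule tendsto_eventually)
qed

lemma poly_eq_sum_atMost:
  fixes q :: "'a::comm_semiring_1 poly"
  assumes "degree q \<le> d"
  shows "poly q x = (\<Sum>i\<le>d. coeff q i * x ^ i)"
  unfolding poly_altdef
  by (rule sum.mono_neutral_left) (use assms in \<open>auto intro: le_degree\<close>)

lemma monic_root_abs_le:
  fixes q :: "real poly"
  assumes monic: "lead_coeff q = 1" and root: "poly q r = 0"
  shows "\<bar>r\<bar> \<le> 1 + (\<Sum>i<degree q. \<bar>coeff q i\<bar>)"
proof (rule ccontr)
  define d where "d = degree q"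
  define S where "S = (\<Sum>i<d. \<bar>coeff q i\<bar>)"
  assume "\<not> ?thesis"
  then have big: "1 + S < \<bar>r\<bar>" by (simp add: S_def d_def)
  have "S \<ge> 0" unfolding S_def by (intro sum_nonneg) auto
  with big have r1: "1 < \<bar>r\<bar>" by linarith
  have "0 = (\<Sum>i\<le>d. coeff q i * r ^ i)" using root poly_eq_sum_atMost[of q d r] by (simp add: d_def)
  also have "\<dots> = (\<Sum>i<d. coeff q i * r ^ i) + r ^ d"
    using monic by (simp add: lessThan_Suc_atMost[symmetric] d_def)
  finally have eq: "\<bar>r\<bar> ^ d = \<bar>\<Sum>i<d. coeff q i * r ^ i\<bar>"
    by (metis add_eq_0_iff abs_minus_cancel power_abs)
  show False
  proof (cases d)
    case 0
    then show ?thesis using eq by simp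
  next
    case (Suc e)
    have "\<bar>\<Sum>i<d. coeff q i * r ^ i\<bar> \<le> (\<Sum>i<d. \<bar>coeff q i\<bar> * \<bar>r\<bar> ^ e)"
    proof (rule order_trans[OF sum_abs sum_mono])
      fix i assume "i \<in> {..<d}"
      then have "\<bar>r\<bar> ^ i \<le> \<bar>r\<bar> ^ e" using Suc r1 by (intro power_increasing) auto
      then show "\<bar>coeff q i * r ^ i\<bar> \<le> \<bar>coeff q i\<bar> * \<bar>r\<bar> ^ e"
        by (simp add: abs_mult power_abs mult_left_mono)
    qed
    also have "\<dots> = S * \<bar>r\<bar> ^ e" by (simp add: S_def sum_distrib_right)
    also have "\<dots> < \<bar>r\<bar> * \<bar>r\<bar> ^ e" using big r1 by (intro mult_strict_right_mono) auto
    finally show False using eq Suc by simp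
  qed
qed

lemma coeff_synthetic_div_eq_sum:
  fixes p :: "'a::comm_semiring_1 poly"
  assumes "degree p \<le> d"
  shows "coeff (synthetic_div p c) i = (\<Sum>j<d. coeff p (Suc (i + j)) * c ^ j)"
  using assms
proof (induction p arbitrary: i)
  case 0
  then show ?case by simp
next
  case (pCons a p)
  show ?case
  proof (cases i)
    case 0
    have "degree p < d \<or> p = 0" using pCons.prems pCons.hyps by (cases "p = 0") auto
    then have "poly p c = (\<Sum>j<d. coeff p j * c ^ j)"
      by (cases d) (auto simp: poly_eq_sum_atMost lessThan_Suc_atMost)
    then show ?thesis using 0 by simp
  next
    case (Suc i')
    have "degree p \<le> d" using pCons.prems by (cases "p = 0") auto
    then show ?thesis using Suc pCons.IH[of i'] by simp
  qed
qed

definition coeffs_tendsto :: "(nat \<Rightarrow> 'a::{zero, topological_space} poly) \<Rightarrow> 'a poly \<Rightarrow> bool" where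
  "coeffs_tendsto qs q \<longleftrightarrow> (\<forall>i. (\<lambda>n. coeff (qs n) i) \<longlonglongrightarrow> coeff q i)"

lemma coeffs_tendsto_const: "coeffs_tendsto (\<lambda>n. q) q"
  by (simp add: coeffs_tendsto_def)

lemma coeffs_tendsto_pCons:
  "(c \<longlonglongrightarrow> a) \<Longrightarrow> coeffs_tendsto qs q \<Longrightarrow> coeffs_tendsto (\<lambda>n. pCons (c n) (qs n)) (pCons a q)"
  by (auto simp: coeffs_tendsto_def coeff_pCons split: nat.split)

lemma coeffs_tendsto_add:
  fixes qs :: "nat \<Rightarrow> 'a::topological_comm_monoid_add poly"
  shows "coeffs_tendsto qs q \<Longrightarrow> coeffs_tendsto rs r \<Longrightarrow> coeffs_tendsto (\<lambda>n. qs n + rs n) (q + r)"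
  unfolding coeffs_tendsto_def coeff_add by (intro allI tendsto_intros) auto

lemma coeffs_tendsto_mult:
  fixes qs :: "nat \<Rightarrow> 'a::{comm_semiring_0, topological_semigroup_mult, topological_comm_monoid_add} poly"
  shows "coeffs_tendsto qs q \<Longrightarrow> coeffs_tendsto rs r \<Longrightarrow> coeffs_tendsto (\<lambda>n. qs n * rs n) (q * r)"
  unfolding coeffs_tendsto_def coeff_mult by (intro allI tendsto_intros) auto

lemma coeffs_tendsto_sum:
  fixes qs :: "nat \<Rightarrow> 'i \<Rightarrow> 'a::topological_comm_monoid_add poly"
  assumes "finite I" "\<And>i. i \<in> I \<Longrightarrow> coeffs_tendsto (\<lambda>n. qs n i) (q i)"
  shows "coeffs_tendsto (\<lambda>n. \<Sum>i\<in>I. qs n i) (\<Sum>i\<in>I. q i)"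
  using assms by (induction I rule: finite_induct) (auto simp: coeffs_tendsto_const intro!: coeffs_tendsto_add)

lemma coeffs_tendsto_prod:
  fixes qs :: "nat \<Rightarrow> 'i \<Rightarrow> 'a::{comm_semiring_1, topological_semigroup_mult, topological_comm_monoid_add} poly"
  assumes "finite I" "\<And>i. i \<in> I \<Longrightarrow> coeffs_tendsto (\<lambda>n. qs n i) (q i)"
  shows "coeffs_tendsto (\<lambda>n. \<Prod>i\<in>I. qs n i) (\<Prod>i\<in>I. q i)"
  using assms by (induction I rule: finite_induct) (auto simp: coeffs_tendsto_const intro!: coeffs_tendsto_mult)

lemma coeffs_tendsto_subseq:
  "coeffs_tendsto qs q \<Longrightarrow> strict_mono \<phi> \<Longrightarrow> coeffs_tendsto (\<lambda>n. qs (\<phi> n)) q"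
  unfolding coeffs_tendsto_def using LIMSEQ_subseq_LIMSEQ by (fastforce simp: o_def)

lemma coeffs_tendsto_degree_le:
  fixes qs :: "nat \<Rightarrow> 'a::{zero, t2_space} poly"
  assumes "coeffs_tendsto qs q" "\<And>n. degree (qs n) \<le> d"
  shows "degree q \<le> d"
proof (rule degree_le, intro allI impI)
  fix i assume "d < i"
  then have "(\<lambda>n. coeff (qs n) i) = (\<lambda>n. 0)" using assms(2) by (intro ext coeff_eq_0) (auto intro: le_less_trans)
  then show "coeff q i = 0" using assms(1) by (metis coeffs_tendsto_def LIMSEQ_const_iff)
qed

lemma coeffs_tendsto_poly:
  fixes qs :: "nat \<Rightarrow> 'a::{comm_semiring_1, real_normed_algebra} poly"
  assumes "coeffs_tendsto qs q" "\<And>n. degree (qs n) \<le> d" "r \<longlonglongrightarrow> l"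
  shows "(\<lambda>n. poly (qs n) (r n)) \<longlonglongrightarrow> poly q l"
proof -
  have "(\<lambda>n. \<Sum>i\<le>d. coeff (qs n) i * r n ^ i) \<longlonglongrightarrow> (\<Sum>i\<le>d. coeff q i * l ^ i)"
    using assms(1,3) unfolding coeffs_tendsto_def by (intro tendsto_intros) auto
  then show ?thesis
    using coeffs_tendsto_degree_le[OF assms(1,2)] by (simp add: poly_eq_sum_atMost[of _ d] assms(2))
qed

lemma coeffs_tendsto_synthetic_div:
  fixes qs :: "nat \<Rightarrow> 'a::{comm_semiring_1, real_normed_algebra} poly"
  assumes "coeffs_tendsto qs q" "\<And>n. degree (qs n) \<le> d" "r \<longlonglongrightarrow> l"
  shows "coeffs_tendsto (\<lambda>n. synthetic_div (qs n) (r n)) (synthetic_div q l)"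
  unfolding coeffs_tendsto_def coeff_synthetic_div_eq_sum[OF assms(2)]
    coeff_synthetic_div_eq_sum[OF coeffs_tendsto_degree_le[OF assms(1,2)]]
  using assms(1,3) unfolding coeffs_tendsto_def by (intro allI tendsto_intros) auto

lemma bounded_roots_if_coeffs_tendsto:
  fixes qs :: "nat \<Rightarrow> real poly"
  assumes lim: "coeffs_tendsto qs q" and deg: "\<And>n. degree (qs n) = d"
    and monic: "\<And>n. lead_coeff (qs n) = 1" and root: "\<And>n. poly (qs n) (r n) = 0"
  shows "bounded (range r)"
proof -
  define b where "b n = 1 + (\<Sum>i<d. \<bar>coeff (qs n) i\<bar>)" for n
  have "b \<longlonglongrightarrow> 1 + (\<Sum>i<d. \<bar>coeff q i\<bar>)"
    unfolding b_def using lim unfolding coeffs_tendsto_def by (intro tendsto_intros) auto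
  then have "convergent b" by (rule convergentI)
  then have "Bseq b" by (rule convergent_imp_Bseq)
  then obtain K where K: "\<And>n. norm (b n) \<le> K"
    by (auto simp: Bseq_def)
  have "\<bar>r n\<bar> \<le> K" for n
    using monic_root_abs_le[OF monic root, of n] K[of n] by (simp add: deg b_def)
  then show ?thesis
    unfolding bounded_iff by auto
qed

text \<open>Induction on k: the roots are bounded by the Cauchy bound, so along a subsequence a root
  \<open>\<le> x\<close> converges to a root \<open>\<le> x\<close> of the limit, and the quotients by the corresponding linear
  factors converge coefficientwise.\<close>

lemma root_count_atMost_upper_semicontinuous:
  fixes qs :: "nat \<Rightarrow> real poly"
  assumes "coeffs_tendsto qs q" "\<And>n. degree (qs n) = d" "\<And>n. lead_coeff (qs n) = 1"
    and "\<And>n. k \<le> root_count (qs n) {..x}"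
  shows "k \<le> root_count q {..x}"
  using assms
proof (induction k arbitrary: qs q d)
  case 0
  then show ?case by simp
next
  case (Suc k)
  note lim = Suc.prems(1) and deg = Suc.prems(2) and monic = Suc.prems(3)
  have "\<exists>t \<le> x. poly (qs n) t = 0" for n
    using root_count_pos_imp_root[of "qs n" "{..x}"] Suc.prems(4)[of n] by auto
  then obtain r where r_le: "\<And>n. r n \<le> x" and root: "\<And>n. poly (qs n) (r n) = 0"
    by metis
  obtain l \<phi> where \<phi>: "strict_mono \<phi>" and r_lim: "(r \<circ> \<phi>) \<longlonglongrightarrow> l"
    using bounded_roots_if_coeffs_tendsto[OF lim deg monic root] bounded_imp_convergent_subsequence by blast
  have l_le: "l \<le> x" using r_lim r_le by (intro LIMSEQ_le_const2) auto
  have lim\<phi>: "coeffs_tendsto (\<lambda>n. qs (\<phi> n)) q" by (rule coeffs_tendsto_subseq[OF lim \<phi>])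
  have "degree q \<le> d" using coeffs_tendsto_degree_le[OF lim] deg by simp
  moreover have "(\<lambda>n. coeff (qs n) d) \<longlonglongrightarrow> coeff q d"
    using lim by (simp add: coeffs_tendsto_def)
  then have "coeff q d = 1"
    using monic deg by (simp add: LIMSEQ_const_iff)
  ultimately have deg_q: "degree q = d"
    by (intro antisym le_degree) simp_all
  with \<open>coeff q d = 1\<close> have monic_q: "lead_coeff q = 1" by simp
  have "(\<lambda>n. poly (qs (\<phi> n)) (r (\<phi> n))) \<longlonglongrightarrow> poly q l"
    by (rule coeffs_tendsto_poly[OF lim\<phi>, of d, OF _ r_lim[unfolded o_def]]) (simp add: deg)
  then have root_l: "poly q l = 0" using root by (simp add: LIMSEQ_const_iff)
  define Q where "Q n = synthetic_div (qs (\<phi> n)) (r (\<phi> n))" for n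
  have fac: "qs (\<phi> n) = [:-r (\<phi> n), 1:] * Q n" for n
    using synthetic_div_correct'[of "r (\<phi> n)" "qs (\<phi> n)"] root by (simp add: Q_def)
  have fac_l: "q = [:-l, 1:] * synthetic_div q l"
    using synthetic_div_correct'[of l q] root_l by simp
  have monic_Q: "lead_coeff (Q n) = 1" for n
  proof -
    have "lead_coeff (qs (\<phi> n)) = lead_coeff [:-r (\<phi> n), 1:] * lead_coeff (Q n)"
      unfolding fac by (rule lead_coeff_mult)
    with monic show ?thesis by simp
  qed
  have "k \<le> root_count (synthetic_div q l) {..x}"
  proof (rule Suc.IH)
    show "coeffs_tendsto Q (synthetic_div q l)"
      unfolding Q_def by (rule coeffs_tendsto_synthetic_div[OF lim\<phi>, of d, OF _ r_lim[unfolded o_def]]) (simp add: deg)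
    show "degree (Q n) = d - 1" for n by (simp add: Q_def degree_synthetic_div deg)
    show "lead_coeff (Q n) = 1" for n by (rule monic_Q)
    fix n
    have "Q n \<noteq> 0" using monic_Q[of n] by auto
    then have "root_count (qs (\<phi> n)) {..x} = root_count (Q n) {..x} + 1"
      unfolding fac using root_count_linear_factor[of "Q n" "r (\<phi> n)" "{..x}"] r_le by simp
    then show "k \<le> root_count (Q n) {..x}"
      using Suc.prems(4)[of "\<phi> n"] by simp
  qed
  moreover have "q \<noteq> 0" using monic_q by auto
  then have "synthetic_div q l \<noteq> 0" using fac_l by (metis mult_zero_right)
  then have "root_count q {..x} = root_count (synthetic_div q l) {..x} + 1"
    using root_count_linear_factor[of "synthetic_div q l" l "{..x}"] l_le
    unfolding fac_l[symmetric] by simp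
  ultimately show ?case by simp
qed

lemma coeffs_tendsto_char_poly:
  fixes As :: "nat \<Rightarrow> real mat"
  assumes As: "\<And>m. As m \<in> carrier_mat n n" and A: "A \<in> carrier_mat n n"
    and lim: "\<And>i j. i < n \<Longrightarrow> j < n \<Longrightarrow> (\<lambda>m. As m $$ (i, j)) \<longlonglongrightarrow> A $$ (i, j)"
  shows "coeffs_tendsto (\<lambda>m. char_poly (As m)) (char_poly A)"
proof -
  have expand: "char_poly B = (\<Sum>\<pi> | \<pi> permutes {0..<n}. of_int (sign \<pi>) *
      (\<Prod>i = 0..<n. [:0, 1:] * (if i = \<pi> i then 1 else 0) + [:- B $$ (i, \<pi> i):]))"
    if B: "B \<in> carrier_mat n n" for B :: "real mat"
  proof -
    have cm: "char_poly_matrix B \<in> carrier_mat n n" using B by (simp add: char_poly_matrix_def)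
    show ?thesis
      unfolding char_poly_def det_def'[OF cm]
      by (intro sum.cong refl arg_cong2[where f = "(*)"] prod.cong)
         (use B in \<open>auto simp: char_poly_matrix_def permutes_in_image\<close>)
  qed
  show ?thesis
    unfolding expand[OF As] expand[OF A]
  proof (intro coeffs_tendsto_sum coeffs_tendsto_mult coeffs_tendsto_prod coeffs_tendsto_add coeffs_tendsto_const)
    fix \<pi> i assume "\<pi> \<in> {\<pi>. \<pi> permutes {0..<n}}" "i \<in> {0..<n}"
    then have "(\<lambda>m. As m $$ (i, \<pi> i)) \<longlonglongrightarrow> A $$ (i, \<pi> i)"
      by (intro lim) (auto simp: permutes_in_image)
    then show "coeffs_tendsto (\<lambda>m. [:- As m $$ (i, \<pi> i):]) [:- A $$ (i, \<pi> i):]"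
      by (intro coeffs_tendsto_pCons tendsto_minus coeffs_tendsto_const)
  qed (simp_all add: finite_permutations)
qed

lemma closed_char_poly_root_count_atMost_ge:
  fixes S :: "'b::first_countable_topology \<Rightarrow> real mat"
  assumes carrier: "\<And>v. S v \<in> carrier_mat p p"
    and cont: "\<And>i j. i < p \<Longrightarrow> j < p \<Longrightarrow> continuous_on UNIV (\<lambda>v. S v $$ (i, j))"
  shows "closed {v. k \<le> root_count (char_poly (S v)) {..x}}"
  unfolding closed_sequential_limits
proof (intro allI impI)
  fix vs l assume "(\<forall>n. vs n \<in> {v. k \<le> root_count (char_poly (S v)) {..x}}) \<and> vs \<longlonglongrightarrow> l"
  then have ge: "\<And>n. k \<le> root_count (char_poly (S (vs n))) {..x}" and vs: "vs \<longlonglongrightarrow> l" by auto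
  have "(\<lambda>m. S (vs m) $$ (i, j)) \<longlonglongrightarrow> S l $$ (i, j)" if "i < p" "j < p" for i j
    using continuous_on_tendsto_compose[OF cont[OF that] vs] by simp
  then have "coeffs_tendsto (\<lambda>m. char_poly (S (vs m))) (char_poly (S l))"
    by (rule coeffs_tendsto_char_poly[OF carrier carrier])
  then show "l \<in> {v. k \<le> root_count (char_poly (S v)) {..x}}"
    using root_count_atMost_upper_semicontinuous[OF _ _ _ ge] degree_monic_char_poly[OF carrier] by auto
qed

lemma borel_measurable_root_count:
  fixes Q :: "'b \<Rightarrow> real poly"
  assumes nz: "\<And>v. Q v \<noteq> 0"
    and atMost: "\<And>x. (\<lambda>v. real (root_count (Q v) {..x})) \<in> borel_measurable M"
    and B: "B \<in> sets borel"
  shows "(\<lambda>v. real (root_count (Q v) B)) \<in> borel_measurable M"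
proof -
  have "Int_stable (range (atMost :: real \<Rightarrow> real set))"
    by (auto simp: Int_stable_def)
  moreover have "range atMost \<subseteq> Pow (UNIV :: real set)" by simp
  moreover have "B \<in> sigma_sets UNIV (range atMost)"
    using B by (simp add: borel_eq_atMost)
  ultimately show ?thesis
  proof (induction rule: sigma_sets_induct_disjoint)
    case (basic A)
    then show ?case using atMost by auto
  next
    case empty
    then show ?case by (simp add: root_count_def)
  next
    case (compl A)
    have "(\<lambda>v. real (root_count (Q v) UNIV)) \<in> borel_measurable M"
      using root_count_atMost_tendsto_UNIV[OF nz] atMost by (rule borel_measurable_LIMSEQ_real)
    with compl.IH show ?case
      by (simp add: root_count_Diff_UNIV[OF nz])
  next
    case (union A)
    have "real (root_count (Q v) (\<Union>i. A i)) = (\<Sum>i. real (root_count (Q v) (A i)))" for v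
      using root_count_sums[OF nz union.hyps(1)] by (rule sums_unique)
    with union.IH show ?case
      by (simp add: borel_measurable_suminf)
  qed
qed

lemma borel_measurable_eig_count:
  fixes S :: "'b::first_countable_topology \<Rightarrow> real mat"
  assumes carrier: "\<And>v. S v \<in> carrier_mat p p"
    and cont: "\<And>i j. i < p \<Longrightarrow> j < p \<Longrightarrow> continuous_on UNIV (\<lambda>v. S v $$ (i, j))"
    and B: "B \<in> sets borel"
  shows "(\<lambda>v. real (eig_count (S v) B)) \<in> borel_measurable borel"
  unfolding eig_count_eq_root_count
proof (rule borel_measurable_root_count[OF _ _ B])
  show "char_poly (S v) \<noteq> 0" for v
    using degree_monic_char_poly[OF carrier[of v]] by auto
  fix x
  let ?f = "\<lambda>v. root_count (char_poly (S v)) {..x}"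
  have "?f \<in> borel \<rightarrow>\<^sub>M count_space UNIV"
    unfolding measurable_count_space_eq2_countable
  proof (intro conjI ballI)
    fix a :: nat
    have "?f -` {a} \<inter> space borel = {v. a \<le> ?f v} - {v. Suc a \<le> ?f v}" by auto
    also have "\<dots> \<in> sets borel"
      by (intro sets.Diff borel_closed closed_char_poly_root_count_atMost_ge[OF carrier cont])
    finally show "?f -` {a} \<inter> space borel \<in> sets borel" .
  qed simp
  then show "(\<lambda>v. real (?f v)) \<in> borel_measurable borel"
    by (rule measurable_compose) simp
qed

lemma (in prob_space) distr_iid_process:
  assumes rv: "\<And>i. X i \<in> M \<rightarrow>\<^sub>M N" and indep: "indep_vars (\<lambda>_. N) X UNIV"
    and ident: "\<And>i. distr M N (X i) = \<mu>"
  shows "distr M (\<Pi>\<^sub>M i\<in>UNIV. N) (\<lambda>\<omega> i. X i \<omega>) = (\<Pi>\<^sub>M i\<in>UNIV. \<mu>)"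
proof -
  have "distr M (\<Pi>\<^sub>M i\<in>UNIV. N) (\<lambda>\<omega>. \<lambda>i\<in>UNIV. X i \<omega>) = (\<Pi>\<^sub>M i\<in>UNIV. distr M N (X i))"
    using indep indep_vars_iff_distr_eq_PiM[where I=UNIV and M'="\<lambda>_. N" and X=X] rv by simp
  then show ?thesis
    by (simp add: restrict_UNIV ident)
qed

lemma (in prob_space) distr_iid_process_reindex:
  assumes rv: "\<And>i. X i \<in> M \<rightarrow>\<^sub>M N" and indep: "indep_vars (\<lambda>_. N) X UNIV"
    and ident: "\<And>i. distr M N (X i) = \<mu>" and f: "inj f"
  shows "distr M (\<Pi>\<^sub>M i\<in>UNIV. N) (\<lambda>\<omega> i. X (f i) \<omega>) = distr M (\<Pi>\<^sub>M i\<in>UNIV. N) (\<lambda>\<omega> i. X i \<omega>)"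
proof -
  have process: "(\<lambda>\<omega> i. X i \<omega>) \<in> M \<rightarrow>\<^sub>M (\<Pi>\<^sub>M i\<in>UNIV. N)"
    using rv by (intro measurable_restrict[where I=UNIV, unfolded restrict_UNIV])
  have reindex: "(\<lambda>w. \<lambda>i\<in>UNIV. w (f i)) \<in> (\<Pi>\<^sub>M i\<in>UNIV. N) \<rightarrow>\<^sub>M (\<Pi>\<^sub>M i\<in>UNIV. N)"
    by (rule measurable_restrict) simp
  have "prob_space \<mu>" using prob_space_distr[OF rv] ident by metis
  have sets_\<mu>: "sets \<mu> = sets N" using sets_distr ident by metis
  have "distr M (\<Pi>\<^sub>M i\<in>UNIV. N) (\<lambda>\<omega> i. X (f i) \<omega>)
      = distr (distr M (\<Pi>\<^sub>M i\<in>UNIV. N) (\<lambda>\<omega> i. X i \<omega>)) (\<Pi>\<^sub>M i\<in>UNIV. N) (\<lambda>w. \<lambda>i\<in>UNIV. w (f i))"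
    unfolding distr_distr[OF reindex process] by (simp add: comp_def restrict_UNIV)
  also have "\<dots> = distr (\<Pi>\<^sub>M i\<in>UNIV. \<mu>) (\<Pi>\<^sub>M i\<in>UNIV. \<mu>) (\<lambda>w. \<lambda>i\<in>UNIV. w (f i))"
    unfolding distr_iid_process[OF rv indep ident]
    by (intro distr_cong sets_PiM_cong) (simp_all add: sets_\<mu>)
  also have "\<dots> = (\<Pi>\<^sub>M i\<in>UNIV. \<mu>)"
    using distr_PiM_reindex[of UNIV "\<lambda>_. \<mu>" f UNIV] \<open>prob_space \<mu>\<close> f by simp
  finally show ?thesis
    by (simp add: distr_iid_process[OF rv indep ident])
qed

lemma nn_integral_process_eq_if_same_law:
  fixes X Y :: "'i \<Rightarrow> 'a \<Rightarrow> 'b"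
  assumes X: "\<And>i. X i \<in> M \<rightarrow>\<^sub>M N" and Y: "\<And>i. Y i \<in> M \<rightarrow>\<^sub>M N"
    and law: "distr M (\<Pi>\<^sub>M i\<in>UNIV. N) (\<lambda>\<omega> i. X i \<omega>) = distr M (\<Pi>\<^sub>M i\<in>UNIV. N) (\<lambda>\<omega> i. Y i \<omega>)"
    and G: "G \<in> borel_measurable (\<Pi>\<^sub>M i\<in>UNIV. N)"
  shows "(\<integral>\<^sup>+\<omega>. G (\<lambda>i. X i \<omega>) \<partial>M) = (\<integral>\<^sup>+\<omega>. G (\<lambda>i. Y i \<omega>) \<partial>M)"
proof -
  have process: "(\<lambda>\<omega> i. Z i \<omega>) \<in> M \<rightarrow>\<^sub>M (\<Pi>\<^sub>M i\<in>UNIV. N)"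
    if "\<And>i. Z i \<in> M \<rightarrow>\<^sub>M N" for Z :: "'i \<Rightarrow> 'a \<Rightarrow> 'b"
    using that by (intro measurable_restrict[where I=UNIV, unfolded restrict_UNIV])
  have "(\<integral>\<^sup>+\<omega>. G (\<lambda>i. X i \<omega>) \<partial>M) = integral\<^sup>N (distr M (\<Pi>\<^sub>M i\<in>UNIV. N) (\<lambda>\<omega> i. X i \<omega>)) G"
    using G by (intro nn_integral_distr[symmetric] process X) simp
  also have "\<dots> = (\<integral>\<^sup>+\<omega>. G (\<lambda>i. Y i \<omega>) \<partial>M)"
    unfolding law using G by (intro nn_integral_distr process Y) simp
  finally show ?thesis .
qed

lemma EESD_eq_if_same_law:
  fixes X Y :: "'i::countable \<Rightarrow> 'a \<Rightarrow> real" and S :: "('i \<Rightarrow> real) \<Rightarrow> real mat"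
  assumes X: "\<And>i. X i \<in> borel_measurable M" and Y: "\<And>i. Y i \<in> borel_measurable M"
    and law: "distr M (\<Pi>\<^sub>M i\<in>UNIV. borel) (\<lambda>\<omega> i. X i \<omega>) = distr M (\<Pi>\<^sub>M i\<in>UNIV. borel) (\<lambda>\<omega> i. Y i \<omega>)"
    and carrier: "\<And>v. S v \<in> carrier_mat p p"
    and cont: "\<And>i j. i < p \<Longrightarrow> j < p \<Longrightarrow> continuous_on UNIV (\<lambda>v. S v $$ (i, j))"
  shows "EESD M (\<lambda>\<omega>. S (\<lambda>i. X i \<omega>)) p = EESD M (\<lambda>\<omega>. S (\<lambda>i. Y i \<omega>)) p"
  unfolding EESD_def
proof (rule measure_of_eq)
  fix B :: "real set" assume "B \<in> sigma_sets UNIV (sets borel)"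
  then have B: "B \<in> sets (borel :: real measure)" by (metis sets.sigma_sets_eq space_borel)
  have "(\<lambda>v. ennreal (real (eig_count (S v) B) / real p)) \<in> borel_measurable borel"
    using borel_measurable_eig_count[OF carrier cont B] by measurable
  then have "(\<lambda>v. ennreal (real (eig_count (S v) B) / real p)) \<in> borel_measurable (\<Pi>\<^sub>M i\<in>UNIV. borel)"
    unfolding measurable_cong_sets[OF sets_PiM_equal_borel refl] .
  then show "(\<integral>\<^sup>+\<omega>. ennreal (real (eig_count (S (\<lambda>i. X i \<omega>)) B) / real p) \<partial>M)
      = (\<integral>\<^sup>+\<omega>. ennreal (real (eig_count (S (\<lambda>i. Y i \<omega>)) B) / real p) \<partial>M)"
    by (rule nn_integral_process_eq_if_same_law[OF X Y law])
qed simp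

lemma index_mult_transpose_mat:
  assumes "A \<in> carrier_mat p n" "i < p" "j < p"
  shows "(A * transpose_mat A) $$ (i, j) = (\<Sum>l<n. A $$ (i, l) * A $$ (j, l))"
  using assms by (simp add: scalar_prod_def atLeast0LessThan mult.commute)

lemma link_gram_index:
  assumes "i < p" "j < p"
  shows "(link_matrix p n L x * transpose_mat (link_matrix p n L x)) $$ (i, j)
       = (\<Sum>l<n. x (L n (i + 1) (l + 1)) * x (L n (j + 1) (l + 1)))"
proof -
  have A: "link_matrix p n L x \<in> carrier_mat p n" by (simp add: link_matrix_def)
  show ?thesis
    unfolding index_mult_transpose_mat[OF A assms] using assms by (simp add: link_matrix_def)
qed

lemma link_gram_carrier: "link_matrix p n L x * transpose_mat (link_matrix p n L x) \<in> carrier_mat p p"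
  by (rule mult_carrier_mat[of _ p n]) (simp_all add: link_matrix_def)

lemma continuous_on_link_gram_index:
  assumes "i < p" "j < p"
  shows "continuous_on UNIV (\<lambda>x. (link_matrix p n L x * transpose_mat (link_matrix p n L x)) $$ (i, j))"
  unfolding link_gram_index[OF assms]
  by (intro continuous_on_sum continuous_on_mult continuous_on_product_coordinates)

lemma link_T_gram_eq_link_H_gram_shifted:
  fixes x :: "int \<Rightarrow> real" and n :: nat
  defines "y \<equiv> \<lambda>k. x (k - int (n + 1))"
  shows "link_matrix p n link_T x * transpose_mat (link_matrix p n link_T x)
       = link_matrix p n link_H y * transpose_mat (link_matrix p n link_H y)"
proof (rule eq_matI)
  fix i j assume "i < dim_row (link_matrix p n link_H y * transpose_mat (link_matrix p n link_H y))"
    "j < dim_col (link_matrix p n link_H y * transpose_mat (link_matrix p n link_H y))"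
  then have i: "i < p" and j: "j < p" by (simp_all add: link_matrix_def)
  have "(\<Sum>l<n. x (int i - int l) * x (int j - int l))
      = (\<Sum>l<n. x (int i + int l + 1 - int n) * x (int j + int l + 1 - int n))"
    by (rule sum.reindex_bij_witness[of _ "\<lambda>l. n - 1 - l" "\<lambda>l. n - 1 - l"]) (auto simp: of_nat_diff)
  then show "(link_matrix p n link_T x * transpose_mat (link_matrix p n link_T x)) $$ (i, j)
      = (link_matrix p n link_H y * transpose_mat (link_matrix p n link_H y)) $$ (i, j)"
    by (simp add: link_gram_index i j link_T_def link_H_def y_def algebra_simps)
qed (simp_all add: link_matrix_def)

lemma sum_lessThan_periodic_shift:
  fixes h :: "int \<Rightarrow> 'a::comm_monoid_add"
  assumes periodic: "\<And>m. h (m mod int n) = h m"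
  shows "(\<Sum>l<n. h (int l + c)) = (\<Sum>l<n. h (int l))"
proof (cases "n = 0")
  case False
  then have n: "int n > 0" by simp
  have "(\<Sum>l<n. h (int l + c)) = (\<Sum>l<n. h (int (nat ((int l + c) mod int n))))"
    using n by (intro sum.cong) (simp_all add: periodic)
  also have "\<dots> = (\<Sum>l<n. h (int l))"
  proof (rule sum.reindex_bij_witness[of _ "\<lambda>l. nat ((int l - c) mod int n)" "\<lambda>l. nat ((int l + c) mod int n)"])
    fix l assume l: "l \<in> {..<n}"
    show "nat ((int (nat ((int l - c) mod int n)) + c) mod int n) = l"
      using n l by (simp add: mod_add_left_eq)
    show "nat ((int (nat ((int l + c) mod int n)) - c) mod int n) = l"
      using n l by (simp add: mod_diff_left_eq)
  qed (use n in \<open>simp_all add: nat_less_iff\<close>)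
  finally show ?thesis .
qed simp

definition reversal_mat :: "nat \<Rightarrow> 'a::{zero, one} mat" where
  "reversal_mat p = mat p p (\<lambda>(i, j). if i + j + 1 = p then 1 else 0)"

lemma reversal_mat_carrier: "reversal_mat p \<in> carrier_mat p p"
  by (simp add: reversal_mat_def)

lemma dim_row_reversal_mat [simp]: "dim_row (reversal_mat p) = p"
  and dim_col_reversal_mat [simp]: "dim_col (reversal_mat p) = p"
  by (simp_all add: reversal_mat_def)

lemma index_reversal_mat_mult:
  fixes B :: "'a::semiring_1 mat"
  assumes "B \<in> carrier_mat p m" "i < p" "j < m"
  shows "(reversal_mat p * B) $$ (i, j) = B $$ (p - 1 - i, j)"
proof -
  have "(reversal_mat p * B) $$ (i, j) = (\<Sum>k<p. (if i + k + 1 = p then 1 else 0) * B $$ (k, j))"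
    using assms by (simp add: reversal_mat_def scalar_prod_def atLeast0LessThan)
  also have "\<dots> = (\<Sum>k<p. if k = p - 1 - i then B $$ (k, j) else 0)"
    using assms by (intro sum.cong) auto
  finally show ?thesis using assms by simp
qed

lemma index_mult_reversal_mat:
  fixes B :: "'a::semiring_1 mat"
  assumes "B \<in> carrier_mat m p" "i < m" "j < p"
  shows "(B * reversal_mat p) $$ (i, j) = B $$ (i, p - 1 - j)"
proof -
  have "(B * reversal_mat p) $$ (i, j) = (\<Sum>k<p. B $$ (i, k) * (if k + j + 1 = p then 1 else 0))"
    using assms by (simp add: reversal_mat_def scalar_prod_def atLeast0LessThan)
  also have "\<dots> = (\<Sum>k<p. if k = p - 1 - j then B $$ (i, k) else 0)"
    using assms by (intro sum.cong) auto
  finally show ?thesis using assms by simp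
qed

lemma reversal_mat_involutive: "reversal_mat p * reversal_mat p = (1\<^sub>m p :: 'a::semiring_1 mat)"
proof (rule eq_matI)
  fix i j assume "i < dim_row (1\<^sub>m p :: 'a mat)" "j < dim_col (1\<^sub>m p :: 'a mat)"
  then show "(reversal_mat p * reversal_mat p) $$ (i, j) = (1\<^sub>m p :: 'a mat) $$ (i, j)"
    by (subst index_reversal_mat_mult[OF reversal_mat_carrier]) (auto simp: reversal_mat_def)
qed (simp_all add: reversal_mat_def)

lemma similar_mat_reversal_conj:
  fixes B :: "'a::comm_ring_1 mat"
  assumes "B \<in> carrier_mat p p"
  shows "similar_mat (reversal_mat p * B * reversal_mat p) B"
  unfolding similar_mat_def similar_mat_wit_def Let_def
  using assms reversal_mat_carrier[of p] reversal_mat_involutive[of p]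
  by (intro exI[of _ "reversal_mat p"]) auto

lemma link_R_gram_eq_reversal_conj_link_C_gram:
  fixes x :: "int \<Rightarrow> real"
  shows "link_matrix p n link_R x * transpose_mat (link_matrix p n link_R x)
       = reversal_mat p * (link_matrix p n link_C x * transpose_mat (link_matrix p n link_C x)) * reversal_mat p"
    (is "?R = reversal_mat p * ?C * reversal_mat p")
proof (rule eq_matI)
  fix i j assume "i < dim_row (reversal_mat p * ?C * reversal_mat p)" "j < dim_col (reversal_mat p * ?C * reversal_mat p)"
  then have i: "i < p" and j: "j < p" by simp_all
  define h where "h m = x ((int i + m) mod int n) * x ((int j + m) mod int n)" for m
  have periodic: "h (m mod int n) = h m" for m
    by (simp add: h_def mod_add_right_eq)
  have "?R $$ (i, j) = (\<Sum>l<n. h (int l))"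
    by (simp add: link_gram_index i j link_R_def h_def add_ac)
  also have "\<dots> = (\<Sum>l<n. h (int l + (1 - int p)))"
    using sum_lessThan_periodic_shift[of h n "1 - int p", OF periodic] by simp
  also have "\<dots> = ?C $$ (p - 1 - i, p - 1 - j)"
    using i j by (simp add: link_gram_index link_C_def h_def of_nat_diff algebra_simps)
  also have "\<dots> = (reversal_mat p * ?C) $$ (i, p - 1 - j)"
    using i j by (intro index_reversal_mat_mult[OF link_gram_carrier, symmetric]) auto
  also have "\<dots> = (reversal_mat p * ?C * reversal_mat p) $$ (i, j)"
    using i j by (intro index_mult_reversal_mat[OF mult_carrier_mat[OF reversal_mat_carrier link_gram_carrier], symmetric])
  finally show "?R $$ (i, j) = (reversal_mat p * ?C * reversal_mat p) $$ (i, j)" .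
qed (simp_all add: link_matrix_def)

lemma real_distribution_eqI_cdf_off_countable:
  assumes M1: "real_distribution M1" and M2: "real_distribution M2"
    and D: "countable D" and eq: "\<And>x. x \<notin> D \<Longrightarrow> cdf M1 x = cdf M2 x"
  shows "M1 = M2"
proof (rule cdf_unique[OF M1 M2], rule ext)
  interpret M1: real_distribution M1 by (rule M1)
  interpret M2: real_distribution M2 by (rule M2)
  fix x
  have "\<exists>b. b \<notin> D \<and> x < b \<and> b < x + 1 / Suc k" for k :: nat
    using open_minus_countable[OF D, of "{x <..< x + 1 / Suc k}"] by auto
  then obtain b where b: "\<And>k. b k \<notin> D" "\<And>k. x < b k" "\<And>k. b k < x + 1 / Suc k"
    by metis
  have "b \<longlonglongrightarrow> x"
  proof (rule tendsto_sandwich[of "\<lambda>_. x" _ _ "\<lambda>k. x + 1 / Suc k"])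
    show "(\<lambda>k. x + 1 / real (Suc k)) \<longlonglongrightarrow> x"
      using tendsto_add[OF tendsto_const LIMSEQ_inverse_real_of_nat] by (simp add: inverse_eq_divide)
  qed (use b in \<open>auto intro!: always_eventually less_imp_le\<close>)
  then have b_right: "filterlim b (at_right x) sequentially"
    using b(2) by (auto simp: filterlim_at intro: always_eventually)
  have "(\<lambda>k. cdf M1 (b k)) \<longlonglongrightarrow> cdf M1 x" "(\<lambda>k. cdf M2 (b k)) \<longlonglongrightarrow> cdf M2 x"
    using M1.cdf_is_right_cont[of x] M2.cdf_is_right_cont[of x]
    by (auto simp: continuous_within intro: filterlim_compose[OF _ b_right])
  then show "cdf M1 x = cdf M2 x"
    using eq[OF b(1)] LIMSEQ_unique by auto
qed

lemma weak_conv_m_unique: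
  assumes M1: "real_distribution M1" and M2: "real_distribution M2"
    and "weak_conv_m F M1" "weak_conv_m F M2"
  shows "M1 = M2"
proof -
  interpret M1: real_distribution M1 by (rule M1)
  interpret M2: real_distribution M2 by (rule M2)
  let ?D = "{x. measure M1 {x} \<noteq> 0} \<union> {x. measure M2 {x} \<noteq> 0}"
  have "countable ?D" by (intro countable_Un M1.countable_support M2.countable_support)
  moreover have "cdf M1 x = cdf M2 x" if "x \<notin> ?D" for x
  proof -
    have "(\<lambda>n. cdf (F n) x) \<longlonglongrightarrow> cdf M1 x" "(\<lambda>n. cdf (F n) x) \<longlonglongrightarrow> cdf M2 x"
      using assms(3,4) that M1.isCont_cdf M2.isCont_cdf by (auto simp: weak_conv_m_def weak_conv_def)
    then show ?thesis by (rule LIMSEQ_unique)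
  qed
  ultimately show ?thesis by (rule real_distribution_eqI_cdf_off_countable[OF M1 M2])
qed

lemma (in prob_space) EESD_link_T_eq_link_H:
  fixes X :: "int \<Rightarrow> 'a \<Rightarrow> real"
  assumes rv: "\<And>i. X i \<in> borel_measurable M"
    and indep: "indep_vars (\<lambda>_. borel) X UNIV"
    and ident: "\<And>i. distr M borel (X i) = distr M borel (X 0)"
  shows "EESD M (\<lambda>\<omega>. let A = link_matrix p n link_T (\<lambda>i. X i \<omega>) in A * transpose_mat A) p
       = EESD M (\<lambda>\<omega>. let A = link_matrix p n link_H (\<lambda>i. X i \<omega>) in A * transpose_mat A) p"
  unfolding Let_def link_T_gram_eq_link_H_gram_shifted
proof (rule EESD_eq_if_same_law[OF _ rv _ link_gram_carrier continuous_on_link_gram_index])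
  show "distr M (\<Pi>\<^sub>M i\<in>UNIV. borel) (\<lambda>\<omega> i. X (i - int (n + 1)) \<omega>)
      = distr M (\<Pi>\<^sub>M i\<in>UNIV. borel) (\<lambda>\<omega> i. X i \<omega>)"
    by (rule distr_iid_process_reindex[OF rv indep ident]) (simp add: inj_def)
qed (use rv in auto)

lemma EESD_link_R_eq_link_C:
  "EESD M (\<lambda>\<omega>. let A = link_matrix p n link_R (\<lambda>i. X i \<omega>) in A * transpose_mat A) p
 = EESD M (\<lambda>\<omega>. let A = link_matrix p n link_C (\<lambda>i. X i \<omega>) in A * transpose_mat A) p"
  unfolding EESD_def eig_count_def Let_def link_R_gram_eq_reversal_conj_link_C_gram
  by (simp only: char_poly_similar[OF similar_mat_reversal_conj[OF link_gram_carrier]])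

theorem mainTheorem14:
  fixes M :: "nat \<Rightarrow> 'a measure"
    and X :: "nat \<Rightarrow> int \<Rightarrow> 'a \<Rightarrow> real"
    and p :: "nat \<Rightarrow> nat"
    and y :: real
    and C :: "nat \<Rightarrow> real"
    and \<mu>T \<mu>H \<mu>R \<mu>C :: "real measure"
  assumes ratio: "(\<lambda>n. real (p n) / real n) \<longlonglongrightarrow> y" and ypos: "y > 0"
    and prob: "\<And>n. prob_space (M n)"
    and rv: "\<And>n i. X n i \<in> borel_measurable (M n)"
    and indep: "\<And>n. prob_space.indep_vars (M n) (\<lambda>_. borel) (X n) UNIV"
    and ident: "\<And>n i. distr (M n) borel (X n i) = distr (M n) borel (X n 0)"
    and moments: "\<And>n k. integrable (M n) (\<lambda>\<omega>. X n 0 \<omega> ^ k)"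
    and lim: "\<And>k. k \<ge> 1 \<Longrightarrow>
                (\<lambda>n. real n * (\<integral>\<omega>. X n 0 \<omega> ^ k \<partial>M n)) \<longlonglongrightarrow> C k"
    and carleman: "carleman_diverges (alpha C)"
    and distT: "real_distribution \<mu>T" and convT: "weak_conv_m (link_EESD M X p link_T) \<mu>T"
    and distH: "real_distribution \<mu>H" and convH: "weak_conv_m (link_EESD M X p link_H) \<mu>H"
    and distR: "real_distribution \<mu>R" and convR: "weak_conv_m (link_EESD M X p link_R) \<mu>R"
    and distC: "real_distribution \<mu>C" and convC: "weak_conv_m (link_EESD M X p link_C) \<mu>C"
  shows "\<mu>T = \<mu>H \<and> \<mu>R = \<mu>C"
proof
  have "link_EESD M X p link_T = link_EESD M X p link_H"
    unfolding link_EESD_def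
    by (rule ext, rule prob_space.EESD_link_T_eq_link_H[OF prob rv indep ident])
  then show "\<mu>T = \<mu>H"
    using weak_conv_m_unique[OF distT distH convT] convH by simp
  have "link_EESD M X p link_R = link_EESD M X p link_C"
    unfolding link_EESD_def by (rule ext, rule EESD_link_R_eq_link_C)
  then show "\<mu>R = \<mu>C"
    using weak_conv_m_unique[OF distR distC convR] convC by simp
qed

end
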